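(* Assume $s_0=-1$. Then $$\sum_{(\lambda,\mu)\in\mathcal P_0^{-1}}\mathrm{wt}_0(\lambda,\mu)=\sum_{\substack{a,b\in\mathbb Z_{\ge0}^N\\|a|=|b|}}p^{-b_0}\prod_{j=0}^{N-1}z_{0,j}^{a_j}\,z_{j,N-1}^{b_j}\,\frac{p^{a_j(a_j-1)(1+s_{j+1})/4+b_j(b_j-1)(1+s_j)/4}}{(p)_{a_j}(p)_{b_j}},$$ i.e. this is the character of the Fock module $\mathcal F_{\Lambda_0}$ of $\mathcal E_{\mathbf s}$.
   Context: Fix $m\ne n$, $N=m+n\ge3$ and a parity sequence $\mathbf s=(s_1,\dots,s_N)\in\{1,-1\}^N$ with exactly $m$ entries $1$, extended by $s_{i+N}=s_i$. Let $z_0,\dots,z_{N-1}$ be formal variables with $z_{i+N}=z_i$, $p=z_0z_1\cdots z_{N-1}$, $z_{i,j}=\prod_{t=i}^jz_t$ for $i\le j$, $(p)_s=\prod_{i=1}^s(1-p^i)$; for $a=(a_0,\dots,a_{N-1})$ put $|a|=\sum a_i$ and $a_{i+N}=a_i$. For $k\in\mathbb Z$ and $\epsilon\in\{1,-1\}$, $\mathcal P_k^\epsilon$ is the set of pairs $(\lambda,\mu)$ of weakly decreasing sequences $\lambda=(\lambda_1,\lambda_2,\dots)$, $\mu=(\mu_1,\mu_2,\dots)$ of non-negative integers, finitely many nonzero, such that: $\mu_j=0$ whenever $\lambda_j=0$; $\lambda_j=\lambda_{j+1}$ is allowed only if $s_{k+\lambda_j}=\epsilon$ or $\lambda_j=\mu_j=0$;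 $\mu_j=\mu_{j+1}$ is allowed only if $s_{k-\mu_j}=\epsilon$ or $\mu_j=\lambda_{j+1}=0$. Its colour weight is $\mathrm{wt}_k(\lambda,\mu)=\prod_{j\ge1}\prod_{t=0}^{\lambda_j-1}z_{k+t}\cdot\prod_{j\ge1}\prod_{t=1}^{\mu_j}z_{k-t}$ (the number of boxes of each colour mod $N$ in the associated diagram). The set $\mathcal P_0^{-1}$ indexes a basis of the Fock module $\mathcal F_{\Lambda_0}$ and $\mathrm{wt}_0$ is the grading with the highest weight vector of degree $1$. *)

theory Defs
  imports "HOL-Analysis.Analysis" "HOL-Computational_Algebra.Formal_Power_Series"
begin

definition parity_seq :: "nat \<Rightarrow> nat \<Rightarrow> (int \<Rightarrow> int) \<Rightarrow> bool" where
  "parity_seq N m s \<longleftrightarrow> (\<forall>i. s i = 1 \<or> s i = -1) \<and> (\<forall>i. s (i + int N) = s i)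
      \<and> card {i \<in> {1..int N}. s i = 1} = m"

text \<open>Partitions are encoded as functions nat => nat; the paper's part
  lambda_j (j >= 1) is lam (j - 1).\<close>
definition partition_seq :: "(nat \<Rightarrow> nat) \<Rightarrow> bool" where
  "partition_seq lam \<longleftrightarrow> (\<forall>j. lam (Suc j) \<le> lam j) \<and> finite {j. lam j \<noteq> 0}"

definition Pset :: "(int \<Rightarrow> int) \<Rightarrow> int \<Rightarrow> int \<Rightarrow> ((nat \<Rightarrow> nat) \<times> (nat \<Rightarrow> nat)) set" where
  "Pset s k eps = {(lam, mu). partition_seq lam \<and> partition_seq mu
      \<and> (\<forall>j. lam j = 0 \<longrightarrow> mu j = 0)
      \<and> (\<forall>j. lam j = lam (Suc j) \<longrightarrow> s (k + int (lam j)) = eps \<or> (lam j = 0 \<and> mu j = 0))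
      \<and> (\<forall>j. mu j = mu (Suc j) \<longrightarrow> s (k - int (mu j)) = eps \<or> (mu j = 0 \<and> lam (Suc j) = 0))}"

text \<open>Colour weight wt_k: exponent of z_c (0 <= c < N) in the monomial
  prod_j prod_{t=0}^{lam_j - 1} z_{k+t} * prod_j prod_{t=1}^{mu_j} z_{k-t}.\<close>
definition wt_exp :: "nat \<Rightarrow> int \<Rightarrow> (nat \<Rightarrow> nat) \<Rightarrow> (nat \<Rightarrow> nat) \<Rightarrow> nat \<Rightarrow> nat" where
  "wt_exp N k lam mu c =
     (\<Sum>j\<in>{j. lam j \<noteq> 0}. card {t. t < lam j \<and> (k + int t) mod int N = int c})
   + (\<Sum>j\<in>{j. mu j \<noteq> 0}. card {t. 1 \<le> t \<and> t \<le> mu j \<and> (k - int t) mod int N = int c})"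

definition qpoch :: "nat \<Rightarrow> real fps" where
  "qpoch r = (\<Prod>i\<in>{1..r}. 1 - fps_X ^ i)"

text \<open>The summand of the right-hand side for a given (a,b) is
  z^(Eexp a b) * p^(Qexp a b) * Fser a b (p), where Eexp is the (integer)
  exponent vector of p^(-b_0) prod_j z_{0,j}^{a_j} z_{j,N-1}^{b_j}, Qexp the
  exponent of p coming from the quadratic terms, and Fser the power series
  1 / prod_j (p)_{a_j} (p)_{b_j} in the single variable p = z_0 ... z_{N-1}.\<close>
definition Eexp :: "nat \<Rightarrow> (nat \<Rightarrow> nat) \<Rightarrow> (nat \<Rightarrow> nat) \<Rightarrow> nat \<Rightarrow> int" where
  "Eexp N a b t = (\<Sum>j\<in>{j. j < N \<and> t \<le> j}. int (a j)) + (\<Sum>j\<in>{j. j < N \<and> j \<le> t}. int (b j))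
      - int (b 0)"

definition Qexp :: "nat \<Rightarrow> (int \<Rightarrow> int) \<Rightarrow> (nat \<Rightarrow> nat) \<Rightarrow> (nat \<Rightarrow> nat) \<Rightarrow> int" where
  "Qexp N s a b = (\<Sum>j<N. (int (a j) * (int (a j) - 1) * (1 + s (int j + 1))) div 4
                         + (int (b j) * (int (b j) - 1) * (1 + s (int j))) div 4)"

definition Fser :: "nat \<Rightarrow> (nat \<Rightarrow> nat) \<Rightarrow> (nat \<Rightarrow> nat) \<Rightarrow> real fps" where
  "Fser N a b = inverse (\<Prod>j<N. qpoch (a j) * qpoch (b j))"

text \<open>Index set for the coefficient of z^d on the right-hand side: triples
  (a,b,r) with a,b in Z_{>=0}^N (support in {0..<N}), |a| = |b|, and the
  monomial z^(Eexp a b) p^(Qexp a b + r) equal to z^d.\<close>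
definition rhs_index :: "nat \<Rightarrow> (int \<Rightarrow> int) \<Rightarrow> (nat \<Rightarrow> nat) \<Rightarrow>
    ((nat \<Rightarrow> nat) \<times> (nat \<Rightarrow> nat) \<times> nat) set" where
  "rhs_index N s d = {(a, b, r). (\<forall>t\<ge>N. a t = 0) \<and> (\<forall>t\<ge>N. b t = 0)
      \<and> (\<Sum>j<N. a j) = (\<Sum>j<N. b j)
      \<and> (\<forall>t<N. int (d t) = Eexp N a b t + Qexp N s a b + int r)}"

end

theory Submission
  imports Defs
begin

text \<open>
  Since s_0 = -1, the conditions defining P_0^{-1} only restrict positive parts: reading \<lambda> and
  the first l(\<lambda>) parts of \<mu> as multisets A and B, a value v may repeat in A only if s_v = -1
  and in B only if s_{-v} = -1. Classify every part by the colour j of its last box, that is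
  v = Nq + j + 1 in A and v = Nq + (-j mod N) in B; the boxes of the part then contribute
  p^q z_{0,j}, resp. p^q z_{j,N-1} (just p^q if j = 0, whence the factor p^{-b_0}). So if a_j
  and b_j count the parts of class j, the weight is prod_j z_{0,j}^{a_j} z_{j,N-1}^{b_j} p^{-b_0}
  times p to the sum of all quotients q. Within a class the quotients form an arbitrary
  multiset of a_j naturals, or a set of them when s_{j+1} = 1 (resp. s_j = 1 for b_j); their
  generating functions are 1/(p)_k and p^{k(k-1)/2}/(p)_k, and the product over all classes is
  the summand of (a, b).
\<close>

section \<open>Counting generating functions\<close>

definition count_fps :: "'a set \<Rightarrow> ('a \<Rightarrow> nat) \<Rightarrow> real fps" where
  "count_fps X f = Abs_fps (\<lambda>i. real (card {x \<in> X. f x = i}))"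

definition finite_fibres :: "'a set \<Rightarrow> ('a \<Rightarrow> nat) \<Rightarrow> bool" where
  "finite_fibres X f \<longleftrightarrow> (\<forall>i. finite {x \<in> X. f x = i})"

lemma finite_fibres_atMost:
  assumes "finite_fibres X f"
  shows "finite {x \<in> X. f x \<le> R}"
proof -
  have "{x \<in> X. f x \<le> R} = (\<Union>i\<le>R. {x \<in> X. f x = i})" by auto
  then show ?thesis using assms by (simp add: finite_fibres_def)
qed

lemma count_fps_cong: "(\<And>x. x \<in> X \<Longrightarrow> f x = g x) \<Longrightarrow> count_fps X f = count_fps X g"
  by (simp add: count_fps_def cong: conj_cong)

lemma count_fps_image:
  assumes "inj_on h X"
  shows "count_fps (h ` X) f = count_fps X (f \<circ> h)"
proof -
  have "{y \<in> h ` X. f y = i} = h ` {x \<in> X. f (h x) = i}" for i by auto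
  moreover have "inj_on h {x \<in> X. f (h x) = i}" for i using assms by (rule inj_on_subset) auto
  ultimately show ?thesis by (simp add: count_fps_def card_image)
qed

lemma count_fps_add_const: "count_fps X (\<lambda>x. f x + k) = fps_X ^ k * count_fps X f"
proof (rule fps_ext)
  fix i
  have "{x \<in> X. f x + k = i} = (if i < k then {} else {x \<in> X. f x = i - k})" by auto
  then show "fps_nth (count_fps X (\<lambda>x. f x + k)) i = fps_nth (fps_X ^ k * count_fps X f) i"
    by (simp add: count_fps_def fps_X_power_mult_nth)
qed

lemma count_fps_partition:
  assumes "finite_fibres X f"
  shows "count_fps X f = count_fps {x \<in> X. P x} f + count_fps {x \<in> X. \<not> P x} f"
proof (rule fps_ext)
  fix i
  have "{x \<in> X. f x = i} = {x \<in> {x \<in> X. P x}. f x = i} \<union> {x \<in> {x \<in> X. \<not> P x}. f x = i}"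
    by auto
  moreover have "finite {x \<in> {x \<in> X. Q x}. f x = i}" for Q
    by (rule finite_subset[of _ "{x \<in> X. f x = i}"]) (use assms in \<open>auto simp: finite_fibres_def\<close>)
  ultimately have "card {x \<in> X. f x = i}
      = card {x \<in> {x \<in> X. P x}. f x = i} + card {x \<in> {x \<in> X. \<not> P x}. f x = i}"
    by (simp add: card_Un_disjoint disjoint_iff)
  then show "fps_nth (count_fps X f) i = fps_nth (count_fps {x \<in> X. P x} f + count_fps {x \<in> X. \<not> P x} f) i"
    by (simp add: count_fps_def)
qed

lemma count_fps_Times:
  assumes fX: "finite_fibres X f" and fY: "finite_fibres Y g"
  shows "count_fps (X \<times> Y) (\<lambda>(x, y). f x + g y) = count_fps X f * count_fps Y g"
proof (rule fps_ext)
  fix R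
  have eq: "{z \<in> X \<times> Y. (\<lambda>(x, y). f x + g y) z = R}
      = (\<Union>i\<in>{0..R}. {x \<in> X. f x = i} \<times> {y \<in> Y. g y = R - i})"
    by auto
  have "card {z \<in> X \<times> Y. (\<lambda>(x, y). f x + g y) z = R}
      = (\<Sum>i = 0..R. card {x \<in> X. f x = i} * card {y \<in> Y. g y = R - i})"
    unfolding eq using fX fY
    by (subst card_UN_disjoint) (auto simp: finite_fibres_def card_cartesian_product)
  then show "fps_nth (count_fps (X \<times> Y) (\<lambda>(x, y). f x + g y)) R = fps_nth (count_fps X f * count_fps Y g) R"
    by (simp add: count_fps_def fps_mult_nth)
qed

lemma finite_fibres_Times:
  assumes "finite_fibres X f" "finite_fibres Y g"
  shows "finite_fibres (X \<times> Y) (\<lambda>(x, y). f x + g y)"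
  unfolding finite_fibres_def
proof
  fix R
  have "{z \<in> X \<times> Y. (\<lambda>(x, y). f x + g y) z = R} \<subseteq> {x \<in> X. f x \<le> R} \<times> {y \<in> Y. g y \<le> R}"
    by auto
  then show "finite {z \<in> X \<times> Y. (\<lambda>(x, y). f x + g y) z = R}"
    using assms by (auto elim!: finite_subset intro: finite_fibres_atMost)
qed

lemma finite_fibres_PiE:
  assumes "finite I" "\<And>i. i \<in> I \<Longrightarrow> finite_fibres (C i) (w i)"
  shows "finite_fibres (PiE I C) (\<lambda>T. \<Sum>i\<in>I. w i (T i))"
  unfolding finite_fibres_def
proof
  fix R
  have "{T \<in> PiE I C. (\<Sum>i\<in>I. w i (T i)) = R} \<subseteq> PiE I (\<lambda>i. {x \<in> C i. w i x \<le> R})"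
    using \<open>finite I\<close> by (auto simp: PiE_iff extensional_def intro: order.trans[OF member_le_sum])
  moreover have "finite (PiE I (\<lambda>i. {x \<in> C i. w i x \<le> R}))"
    using assms by (simp add: finite_PiE finite_fibres_atMost)
  ultimately show "finite {T \<in> PiE I C. (\<Sum>i\<in>I. w i (T i)) = R}"
    by (rule finite_subset)
qed

lemma count_fps_PiE:
  assumes "finite I" "\<And>i. i \<in> I \<Longrightarrow> finite_fibres (C i) (w i)"
  shows "count_fps (PiE I C) (\<lambda>T. \<Sum>i\<in>I. w i (T i)) = (\<Prod>i\<in>I. count_fps (C i) (w i))"
  using assms
proof (induction I rule: finite_induct)
  case empty
  show ?case by (simp add: count_fps_def fps_eq_iff)
next
  case (insert a I)
  have "count_fps (PiE (insert a I) C) (\<lambda>T. \<Sum>i\<in>insert a I. w i (T i))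
      = count_fps (C a \<times> PiE I C) (\<lambda>(x, T). w a x + (\<Sum>i\<in>I. w i (T i)))"
  proof -
    have "(\<Sum>i\<in>I. w i ((T(a := x)) i)) = (\<Sum>i\<in>I. w i (T i))" for x T
      using insert.hyps(2) by (intro sum.cong) auto
    then have "(\<Sum>i\<in>insert a I. w i ((T(a := x)) i)) = w a x + (\<Sum>i\<in>I. w i (T i))" for x T
      using insert.hyps by simp
    then show ?thesis
      unfolding PiE_insert_eq count_fps_image[OF inj_combinator[OF insert.hyps(2)]]
      by (intro count_fps_cong) auto
  qed
  also have "\<dots> = count_fps (C a) (w a) * count_fps (PiE I C) (\<lambda>T. \<Sum>i\<in>I. w i (T i))"
    using insert by (intro count_fps_Times finite_fibres_PiE) auto
  finally show ?case using insert by simp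
qed

section \<open>Multisets and sets of natural numbers of given size\<close>

definition sized_msets :: "nat \<Rightarrow> bool \<Rightarrow> nat multiset set" where
  "sized_msets k strict = {X. size X = k \<and> (strict \<longrightarrow> (\<forall>q. count X q \<le> 1))}"

lemma mset_member_le_sum_mset: "(q::nat) \<in># X \<Longrightarrow> q \<le> sum_mset X"
  by (metis le_add1 multi_member_split sum_mset.add_mset)

lemma finite_fibres_sized_msets: "finite_fibres (sized_msets k strict) sum_mset"
  unfolding finite_fibres_def
proof
  fix R
  have "{X \<in> sized_msets k strict. sum_mset X = R} \<subseteq> multisets_of_size {..R} k"
    by (auto simp: sized_msets_def multisets_of_size_def dest: mset_member_le_sum_mset)
  then show "finite {X \<in> sized_msets k strict. sum_mset X = R}"
    by (rule finite_subset) (simp add: finite_multisets_of_size)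
qed

lemma count_image_mset_Suc:
  "count (image_mset Suc Y) 0 = 0" "count (image_mset Suc Y) (Suc q) = count Y q"
  by (induction Y) auto

lemma sum_mset_image_mset_Suc: "sum_mset (image_mset Suc X) = sum_mset X + size X"
  by (induction X) auto

lemma sized_msets_without_zero:
  "{X \<in> sized_msets k strict. 0 \<notin># X} = image_mset Suc ` sized_msets k strict"
proof (intro equalityI subsetI)
  fix X assume X: "X \<in> {X \<in> sized_msets k strict. 0 \<notin># X}"
  define Y where "Y = image_mset (\<lambda>q. q - 1) X"
  have "image_mset Suc Y = image_mset id X"
    unfolding Y_def multiset.map_comp
  proof (intro image_mset_cong)
    fix x assume "x \<in># X"
    then have "x \<noteq> 0" using X by (metis (mono_tags, lifting) mem_Collect_eq)
    then show "(Suc \<circ> (\<lambda>q. q - 1)) x = id x" by simp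
  qed
  then have XY: "X = image_mset Suc Y" by simp
  then have "count Y q = count X (Suc q)" for q by (simp add: count_image_mset_Suc)
  then have "Y \<in> sized_msets k strict" using X by (auto simp: sized_msets_def Y_def)
  then show "X \<in> image_mset Suc ` sized_msets k strict" using XY by blast
next
  fix X assume "X \<in> image_mset Suc ` sized_msets k strict"
  then obtain Y where XY: "X = image_mset Suc Y" and Y: "Y \<in> sized_msets k strict" by blast
  have "count X q \<le> 1" if "\<forall>q. count Y q \<le> 1" for q
    using that by (cases q) (simp_all add: XY count_image_mset_Suc)
  then show "X \<in> {X \<in> sized_msets k strict. 0 \<notin># X}"
    using Y by (auto simp: sized_msets_def XY count_image_mset_Suc simp flip: count_eq_zero_iff)
qed

lemma sized_msets_with_zero:
  "{X \<in> sized_msets (Suc k) strict. 0 \<in># X}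
     = add_mset 0 ` (if strict then image_mset Suc ` sized_msets k True else sized_msets k False)"
proof (intro equalityI subsetI)
  fix X assume X: "X \<in> {X \<in> sized_msets (Suc k) strict. 0 \<in># X}"
  define Y where "Y = X - {#0#}"
  have XY: "X = add_mset 0 Y" using X by (simp add: Y_def)
  have "Y \<in> (if strict then {Y \<in> sized_msets k True. 0 \<notin># Y} else sized_msets k False)"
  proof (cases strict)
    case True
    then have cX: "count X q \<le> 1" for q using X by (simp add: sized_msets_def)
    have "count X q = count Y q + (if q = 0 then 1 else 0)" for q by (simp add: XY)
    then have "count Y q \<le> 1" "count Y 0 = 0" for q using cX[of q] cX[of 0] by auto
    then show ?thesis using X XY True by (auto simp: sized_msets_def simp flip: count_eq_zero_iff)
  qed (use X XY in \<open>simp add: sized_msets_def\<close>)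
  then show "X \<in> add_mset 0 ` (if strict then image_mset Suc ` sized_msets k True else sized_msets k False)"
    using XY sized_msets_without_zero[of k True] by (auto split: if_splits)
next
  fix X
  assume "X \<in> add_mset 0 ` (if strict then image_mset Suc ` sized_msets k True else sized_msets k False)"
  then obtain Y where XY: "X = add_mset 0 Y"
    and Y: "Y \<in> (if strict then {Y \<in> sized_msets k True. 0 \<notin># Y} else sized_msets k False)"
    using sized_msets_without_zero[of k True] by (auto split: if_splits)
  show "X \<in> {X \<in> sized_msets (Suc k) strict. 0 \<in># X}"
    using Y by (auto simp: XY sized_msets_def split: if_splits simp flip: count_eq_zero_iff)
qed

lemma count_fps_image_mset_Suc:
  "count_fps (image_mset Suc ` sized_msets k strict) sum_mset
     = fps_X ^ k * count_fps (sized_msets k strict) sum_mset"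
proof -
  have "inj_on (image_mset Suc) (sized_msets k strict)"
    using multiset.inj_map[OF inj_Suc] by (rule inj_on_subset) simp
  have "count_fps (image_mset Suc ` sized_msets k strict) sum_mset
      = count_fps (sized_msets k strict) (\<lambda>X. sum_mset X + k)"
    unfolding count_fps_image[OF \<open>inj_on _ _\<close>] comp_def sum_mset_image_mset_Suc
    by (rule count_fps_cong) (simp add: sized_msets_def)
  then show ?thesis by (simp add: count_fps_add_const)
qed

text \<open>Either a zero is split off (for sets the remaining parts are then positive and are
  lowered by one), or there is no zero and all parts are lowered by one.\<close>

lemma count_fps_sized_msets_Suc:
  "count_fps (sized_msets (Suc k) strict) sum_mset * (1 - fps_X ^ Suc k)
     = (if strict then fps_X ^ k * count_fps (sized_msets k True) sum_mset
        else count_fps (sized_msets k False) sum_mset)"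
proof -
  let ?F = "\<lambda>k strict. count_fps (sized_msets k strict) sum_mset"
  have "inj (add_mset (0::nat))" by (simp add: inj_def)
  then have zero: "count_fps {X \<in> sized_msets (Suc k) strict. 0 \<in># X} sum_mset
      = (if strict then fps_X ^ k * ?F k True else ?F k False)"
    unfolding sized_msets_with_zero
    by (simp add: count_fps_image inj_on_subset comp_def count_fps_image_mset_Suc)
  have "?F (Suc k) strict = count_fps {X \<in> sized_msets (Suc k) strict. 0 \<in># X} sum_mset
      + count_fps {X \<in> sized_msets (Suc k) strict. 0 \<notin># X} sum_mset"
    by (rule count_fps_partition[OF finite_fibres_sized_msets])
  also have "\<dots> = (if strict then fps_X ^ k * ?F k True else ?F k False) + fps_X ^ Suc k * ?F (Suc k) strict"
    by (simp only: zero sized_msets_without_zero count_fps_image_mset_Suc)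
  finally show ?thesis by (simp add: algebra_simps)
qed

lemma qpoch_Suc: "qpoch (Suc k) = qpoch k * (1 - fps_X ^ Suc k)"
  by (simp add: qpoch_def atLeastAtMostSuc_conv mult.commute)

lemma count_fps_sized_msets:
  "count_fps (sized_msets k strict) sum_mset * qpoch k = (if strict then fps_X ^ (k * (k - 1) div 2) else 1)"
proof (induction k arbitrary: strict)
  case 0
  have "{X \<in> sized_msets 0 strict. sum_mset X = i} = (if i = 0 then {{#}} else {})" for i
    by (auto simp: sized_msets_def)
  then show ?case by (simp add: qpoch_def count_fps_def fps_eq_iff)
next
  case (Suc k)
  have "count_fps (sized_msets (Suc k) strict) sum_mset * qpoch (Suc k)
      = (count_fps (sized_msets (Suc k) strict) sum_mset * (1 - fps_X ^ Suc k)) * qpoch k"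
    by (simp add: qpoch_Suc algebra_simps)
  also have "\<dots> = (if strict then fps_X ^ k * (count_fps (sized_msets k True) sum_mset * qpoch k)
                   else count_fps (sized_msets k False) sum_mset * qpoch k)"
    by (simp only: count_fps_sized_msets_Suc) (simp add: mult.assoc)
  also have "\<dots> = (if strict then fps_X ^ (Suc k * (Suc k - 1) div 2) else 1)"
  proof -
    have "k + k * (k - 1) div 2 = Suc k * (Suc k - 1) div 2" by (cases k) auto
    then show ?thesis using Suc.IH[of True] Suc.IH[of False] by (simp add: power_add[symmetric])
  qed
  finally show ?case .
qed

section \<open>Partitions as multisets\<close>

definition num_parts :: "(nat \<Rightarrow> nat) \<Rightarrow> nat" where
  "num_parts lam = card {j. lam j \<noteq> 0}"

lemma partition_seq_nonzero_iff:
  assumes "partition_seq lam"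
  shows "lam j \<noteq> 0 \<longleftrightarrow> j < num_parts lam"
proof -
  have dec: "\<And>n. lam (Suc n) \<le> lam n" and fin: "finite {j. lam j \<noteq> 0}"
    using assms by (auto simp: partition_seq_def)
  have "\<exists>j. lam j = 0"
  proof (rule ccontr)
    assume "\<nexists>j. lam j = 0"
    then have "{j. lam j \<noteq> 0} = UNIV" by auto
    with fin show False by simp
  qed
  define L where "L = (LEAST j. lam j = 0)"
  have "lam L = 0" unfolding L_def using \<open>\<exists>j. lam j = 0\<close> by (rule LeastI_ex)
  have "{j. lam j \<noteq> 0} = {..<L}"
  proof (intro equalityI subsetI)
    fix j assume "j \<in> {j. lam j \<noteq> 0}"
    moreover have "L \<le> j \<Longrightarrow> lam j \<le> lam L" by (rule lift_Suc_antimono_le[of lam, OF dec])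
    ultimately show "j \<in> {..<L}" using \<open>lam L = 0\<close> by (auto simp: not_less[symmetric])
  qed (auto simp: L_def dest: not_less_Least)
  then show ?thesis by (simp add: num_parts_def set_eq_iff)
qed

definition parts_mset :: "(nat \<Rightarrow> nat) \<Rightarrow> nat \<Rightarrow> nat multiset" where
  "parts_mset f L = mset (map f [0..<L])"

definition partition_of_mset :: "nat multiset \<Rightarrow> nat \<Rightarrow> nat" where
  "partition_of_mset M j = (if j < size M then rev (sorted_list_of_multiset M) ! j else 0)"

lemma count_parts_mset: "count (parts_mset f L) v = card {j. j < L \<and> f j = v}"
proof -
  have "count (parts_mset f L) v = card {j. j < L \<and> v = map f [0..<L] ! j}"
    unfolding parts_mset_def count_mset count_list_eq_length_filter length_filter_conv_card
    by simp
  also have "\<dots> = card {j. j < L \<and> f j = v}"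
    by (rule arg_cong[where f = card]) auto
  finally show ?thesis .
qed

lemma sum_mset_image_parts_mset: "(\<Sum>v\<in>#parts_mset f L. g v) = (\<Sum>j<L. g (f j))"
  by (simp add: parts_mset_def sum_unfold_sum_mset multiset.map_comp comp_def atLeast0LessThan)

lemma partition_of_mset_antimono: "partition_of_mset M (Suc j) \<le> partition_of_mset M j"
proof -
  have "sorted (sorted_list_of_multiset M)" by simp
  then have "sorted_wrt (\<ge>) (rev (sorted_list_of_multiset M))" by (simp add: sorted_wrt_rev)
  moreover have "length (rev (sorted_list_of_multiset M)) = size M"
    by (metis length_rev mset_sorted_list_of_multiset size_mset)
  ultimately show ?thesis by (auto simp: partition_of_mset_def sorted_wrt_iff_nth_less)
qed

lemma partition_seq_partition_of_mset: "partition_seq (partition_of_mset M)"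
proof -
  have "{j. partition_of_mset M j \<noteq> 0} \<subseteq> {..<size M}"
    by (auto simp: partition_of_mset_def split: if_splits)
  then show ?thesis
    unfolding partition_seq_def using partition_of_mset_antimono finite_subset by blast
qed

lemma partition_of_mset_parts_mset:
  assumes "\<And>j. f (Suc j) \<le> f j" "\<And>j. L \<le> j \<Longrightarrow> f j = 0"
  shows "partition_of_mset (parts_mset f L) = f"
proof
  fix j
  let ?xs = "map f [0..<L]"
  have "sorted_wrt (\<lambda>x y. y \<le> x) ?xs"
    unfolding sorted_wrt_iff_nth_less using lift_Suc_antimono_le[of f, OF assms(1)] by simp
  then have "sorted (rev ?xs)" by (simp add: sorted_wrt_rev)
  then have "sort ?xs = rev ?xs" using properties_for_sort[of "rev ?xs" ?xs] by simp
  then have "rev (sorted_list_of_multiset (mset ?xs)) = ?xs"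
    by (simp only: sorted_list_of_multiset_mset rev_rev_ident)
  then show "partition_of_mset (parts_mset f L) j = f j"
    unfolding partition_of_mset_def parts_mset_def size_mset using assms(2)[of j] by simp
qed

lemma parts_mset_partition_of_mset: "parts_mset (partition_of_mset M) (size M) = M"
proof -
  have "length (sorted_list_of_multiset M) = size M"
    by (metis mset_sorted_list_of_multiset size_mset)
  then have "map (partition_of_mset M) [0..<size M] = rev (sorted_list_of_multiset M)"
    by (intro nth_equalityI) (simp_all add: partition_of_mset_def)
  then show ?thesis by (simp add: parts_mset_def)
qed

lemma partition_of_mset_nonzero_iff:
  assumes "0 \<notin># M"
  shows "partition_of_mset M j \<noteq> 0 \<longleftrightarrow> j < size M"
proof -
  have "partition_of_mset M j \<noteq> 0" if "j < size M"
  proof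
    have "partition_of_mset M j \<in># M"
      using that by (metis length_rev mset_sorted_list_of_multiset nth_mem partition_of_mset_def
          set_mset_mset set_rev size_mset)
    moreover assume "partition_of_mset M j = 0"
    ultimately show False using assms by simp
  qed
  then show ?thesis by (auto simp: partition_of_mset_def)
qed

lemma repeated_parts_iff:
  assumes dec: "\<And>j. f (Suc j) \<le> f j" and vanish: "\<And>j. L \<le> j \<Longrightarrow> f j = 0" and "P 0"
  shows "(\<forall>v. 2 \<le> count (parts_mset f L) v \<longrightarrow> P v)
    \<longleftrightarrow> (\<forall>j. f j = f (Suc j) \<longrightarrow> P (f j))"
proof
  assume rep: "\<forall>v. 2 \<le> count (parts_mset f L) v \<longrightarrow> P v"
  show "\<forall>j. f j = f (Suc j) \<longrightarrow> P (f j)"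
  proof (intro allI impI)
    fix j assume eq: "f j = f (Suc j)"
    show "P (f j)"
    proof (cases "Suc j < L")
      case True
      then have "{j, Suc j} \<subseteq> {i. i < L \<and> f i = f j}" using eq by auto
      then have "2 \<le> count (parts_mset f L) (f j)"
        unfolding count_parts_mset by (metis card_2_iff card_mono finite_Collect_less_nat n_not_Suc_n finite_Collect_conjI)
      then show ?thesis using rep by blast
    qed (use eq vanish \<open>P 0\<close> in auto)
  qed
next
  assume adj: "\<forall>j. f j = f (Suc j) \<longrightarrow> P (f j)"
  show "\<forall>v. 2 \<le> count (parts_mset f L) v \<longrightarrow> P v"
  proof (intro allI impI)
    fix v assume "2 \<le> count (parts_mset f L) v"
    then have "\<not> card {j. j < L \<and> f j = v} \<le> Suc 0" by (simp add: count_parts_mset)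
    then obtain i k where ik: "i < k" "k < L" "f i = v" "f k = v"
      by (auto simp: card_le_Suc0_iff_eq) (metis linorder_neqE_nat)
    have "f k \<le> f (Suc i)" using ik by (intro lift_Suc_antimono_le[of f, OF dec]) simp
    then have "f i = f (Suc i)" using dec[of i] ik by simp
    then show "P v" using adj ik by metis
  qed
qed

text \<open>With s 0 = -1 repeated zero parts are always allowed, so the exceptional clauses in the
  definition of Pset become redundant.\<close>

lemma Pset_zero_iff:
  assumes "s 0 = -1"
  shows "(lam, mu) \<in> Pset s 0 (-1) \<longleftrightarrow> partition_seq lam \<and> partition_seq mu
    \<and> (\<forall>j. lam j = 0 \<longrightarrow> mu j = 0)
    \<and> (\<forall>j. lam j = lam (Suc j) \<longrightarrow> s (int (lam j)) = -1)
    \<and> (\<forall>j. mu j = mu (Suc j) \<longrightarrow> s (- int (mu j)) = -1)"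
  unfolding Pset_def using assms by (auto 4 3)

definition part_multisets :: "(int \<Rightarrow> int) \<Rightarrow> (nat multiset \<times> nat multiset) set" where
  "part_multisets s = {(A, B). 0 \<notin># A \<and> size A = size B
     \<and> (\<forall>v. 2 \<le> count A v \<longrightarrow> s (int v) = -1) \<and> (\<forall>v. 2 \<le> count B v \<longrightarrow> s (- int v) = -1)}"

definition parts_pair :: "(nat \<Rightarrow> nat) \<times> (nat \<Rightarrow> nat) \<Rightarrow> nat multiset \<times> nat multiset" where
  "parts_pair = (\<lambda>(lam, mu). (parts_mset lam (num_parts lam), parts_mset mu (num_parts lam)))"

lemma parts_pair_in_part_multisets:
  assumes s0: "s 0 = -1" and P: "(lam, mu) \<in> Pset s 0 (-1)"
  shows "parts_pair (lam, mu) \<in> part_multisets s"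
proof -
  let ?L = "num_parts lam"
  have lam: "partition_seq lam" and mu: "partition_seq mu" and "\<forall>j. lam j = 0 \<longrightarrow> mu j = 0"
    and rep_lam: "\<forall>j. lam j = lam (Suc j) \<longrightarrow> s (int (lam j)) = -1"
    and rep_mu: "\<forall>j. mu j = mu (Suc j) \<longrightarrow> s (- int (mu j)) = -1"
    using P by (simp_all add: Pset_zero_iff[where s = s, OF s0])
  have nz: "lam j \<noteq> 0 \<longleftrightarrow> j < ?L" for j by (rule partition_seq_nonzero_iff[OF lam])
  have vanish_lam: "lam j = 0" if "?L \<le> j" for j using nz[of j] that by simp
  then have vanish_mu: "mu j = 0" if "?L \<le> j" for j
    using that \<open>\<forall>j. lam j = 0 \<longrightarrow> mu j = 0\<close> by blast
  have "0 \<notin> lam ` {..<?L}"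
  proof
    assume "0 \<in> lam ` {..<?L}"
    then obtain j where "j < ?L" "lam j = 0" by auto
    with nz[of j] show False by simp
  qed
  then have "0 \<notin># parts_mset lam ?L" by (simp add: parts_mset_def atLeast0LessThan)
  moreover have "\<forall>v. 2 \<le> count (parts_mset lam ?L) v \<longrightarrow> s (int v) = -1"
    using repeated_parts_iff[of lam ?L "\<lambda>v. s (int v) = -1"] lam vanish_lam rep_lam s0
    by (auto simp: partition_seq_def)
  moreover have "\<forall>v. 2 \<le> count (parts_mset mu ?L) v \<longrightarrow> s (- int v) = -1"
    using repeated_parts_iff[of mu ?L "\<lambda>v. s (- int v) = -1"] mu vanish_mu rep_mu s0
    by (auto simp: partition_seq_def)
  ultimately show ?thesis by (simp add: part_multisets_def parts_pair_def parts_mset_def)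
qed

lemma partition_of_mset_pair_in_Pset:
  assumes s0: "s 0 = -1" and AB: "(A, B) \<in> part_multisets s"
  shows "(partition_of_mset A, partition_of_mset B) \<in> Pset s 0 (-1)"
    and "parts_pair (partition_of_mset A, partition_of_mset B) = (A, B)"
proof -
  have A0: "0 \<notin># A" and sz: "size A = size B"
    and rep_A: "\<forall>v. 2 \<le> count A v \<longrightarrow> s (int v) = -1"
    and rep_B: "\<forall>v. 2 \<le> count B v \<longrightarrow> s (- int v) = -1"
    using AB by (auto simp: part_multisets_def)
  have nz: "partition_of_mset A j \<noteq> 0 \<longleftrightarrow> j < size A" for j
    by (rule partition_of_mset_nonzero_iff[OF A0])
  have vanish: "partition_of_mset M j = 0" if "size M \<le> j" for M j
    using that by (simp add: partition_of_mset_def)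
  have "num_parts (partition_of_mset A) = size A"
    using nz by (simp add: num_parts_def)
  then show "parts_pair (partition_of_mset A, partition_of_mset B) = (A, B)"
    using sz parts_mset_partition_of_mset[of A] parts_mset_partition_of_mset[of B]
    by (simp add: parts_pair_def)
  have "\<forall>j. partition_of_mset A j = partition_of_mset A (Suc j) \<longrightarrow> s (int (partition_of_mset A j)) = -1"
    using repeated_parts_iff[of "partition_of_mset A" "size A" "\<lambda>v. s (int v) = -1"] rep_A s0
    by (simp add: partition_of_mset_antimono vanish parts_mset_partition_of_mset)
  moreover have "\<forall>j. partition_of_mset B j = partition_of_mset B (Suc j) \<longrightarrow> s (- int (partition_of_mset B j)) = -1"
    using repeated_parts_iff[of "partition_of_mset B" "size B" "\<lambda>v. s (- int v) = -1"] rep_B s0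
    by (simp add: partition_of_mset_antimono vanish parts_mset_partition_of_mset)
  moreover have "\<forall>j. partition_of_mset A j = 0 \<longrightarrow> partition_of_mset B j = 0"
    using nz sz vanish by (metis not_less)
  ultimately show "(partition_of_mset A, partition_of_mset B) \<in> Pset s 0 (-1)"
    by (simp add: Pset_zero_iff[where s = s, OF s0] partition_seq_partition_of_mset)
qed

lemma bij_betw_parts_pair:
  assumes s0: "s 0 = -1"
  shows "bij_betw parts_pair (Pset s 0 (-1)) (part_multisets s)"
proof (rule bij_betw_byWitness[where f' = "\<lambda>(A, B). (partition_of_mset A, partition_of_mset B)"])
  show "\<forall>p\<in>Pset s 0 (-1). (\<lambda>(A, B). (partition_of_mset A, partition_of_mset B)) (parts_pair p) = p"
  proof (clarify)
    fix lam mu assume P: "(lam, mu) \<in> Pset s 0 (-1)"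
    then have lam: "partition_seq lam" and mu: "partition_seq mu" and "\<forall>j. lam j = 0 \<longrightarrow> mu j = 0"
      by (simp_all add: Pset_zero_iff[where s = s, OF s0])
    then have "lam j = 0" "mu j = 0" if "num_parts lam \<le> j" for j
      using that partition_seq_nonzero_iff[OF lam, of j] by auto
    then show "(\<lambda>(A, B). (partition_of_mset A, partition_of_mset B)) (parts_pair (lam, mu)) = (lam, mu)"
      using lam mu by (simp add: parts_pair_def partition_of_mset_parts_mset partition_seq_def)
  qed
qed (use assms parts_pair_in_part_multisets partition_of_mset_pair_in_Pset in auto)

section \<open>Splitting a multiset into residue classes\<close>

definition class_coding ::
    "nat \<Rightarrow> (nat \<Rightarrow> nat \<Rightarrow> nat) \<Rightarrow> (nat \<Rightarrow> nat) \<Rightarrow> (nat \<Rightarrow> nat) \<Rightarrow> nat set \<Rightarrow> bool" where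
  "class_coding N enc cls quo D \<longleftrightarrow>
     (\<forall>j<N. \<forall>q. enc j q \<in> D \<and> cls (enc j q) = j \<and> quo (enc j q) = q)
     \<and> (\<forall>v\<in>D. cls v < N \<and> enc (cls v) (quo v) = v)"

definition split_classes ::
    "nat \<Rightarrow> (nat \<Rightarrow> nat) \<Rightarrow> (nat \<Rightarrow> nat) \<Rightarrow> nat multiset \<Rightarrow> nat \<Rightarrow> nat multiset" where
  "split_classes N cls quo X = restrict (\<lambda>j. image_mset quo (filter_mset (\<lambda>v. cls v = j) X)) {..<N}"

definition join_classes :: "nat \<Rightarrow> (nat \<Rightarrow> nat \<Rightarrow> nat) \<Rightarrow> (nat \<Rightarrow> nat multiset) \<Rightarrow> nat multiset" where
  "join_classes N enc T = (\<Sum>j<N. image_mset (enc j) (T j))"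

lemma sum_mset_image_join_classes:
  "sum_mset (image_mset w (join_classes N enc T)) = (\<Sum>j<N. sum_mset (image_mset (\<lambda>q. w (enc j q)) (T j)))"
  by (induction N) (simp_all add: join_classes_def multiset.map_comp comp_def)

lemma sum_mset_image_add_const: "sum_mset (image_mset (\<lambda>q. q + k) X) = sum_mset X + k * size (X :: nat multiset)"
  by (induction X) auto

lemma split_classes_extensional: "split_classes N cls quo X \<in> extensional {..<N}"
  by (simp add: split_classes_def)

context
  fixes N enc cls quo D
  assumes coding: "class_coding N enc cls quo D"
begin

lemma count_image_mset_code:
  assumes "j < N"
  shows "count (image_mset (enc j) M) v = (if v \<in> D \<and> cls v = j then count M (quo v) else 0)"
proof -
  have "enc j -` {v} = (if v \<in> D \<and> cls v = j then {quo v} else {})"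
    using coding assms unfolding class_coding_def by (auto; metis)+
  then show ?thesis
    by (cases "quo v \<in># M") (simp_all add: count_image_mset not_in_iff)
qed

lemma count_join_classes:
  "count (join_classes N enc T) v = (if v \<in> D then count (T (cls v)) (quo v) else 0)"
proof -
  have "count (join_classes N enc T) v = (\<Sum>j<N. if v \<in> D \<and> cls v = j then count (T j) (quo v) else 0)"
    by (simp add: join_classes_def count_sum count_image_mset_code)
  also have "\<dots> = (if v \<in> D then count (T (cls v)) (quo v) else 0)"
    using coding by (auto simp: class_coding_def)
  finally show ?thesis .
qed

lemma set_join_classes: "set_mset (join_classes N enc T) \<subseteq> D"
proof
  fix v assume "v \<in># join_classes N enc T"
  then have "count (join_classes N enc T) v \<noteq> 0" by simp
  then show "v \<in> D" by (simp add: count_join_classes split: if_splits)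
qed

lemma count_split_classes:
  assumes "set_mset X \<subseteq> D" "j < N"
  shows "count (split_classes N cls quo X j) q = count X (enc j q)"
proof -
  have "quo -` {q} \<inter> set_mset (filter_mset (\<lambda>v. cls v = j) X) = (if enc j q \<in># X then {enc j q} else {})"
    using coding assms unfolding class_coding_def by auto
  moreover have "cls (enc j q) = j" using coding assms(2) by (simp add: class_coding_def)
  ultimately show ?thesis
    using assms by (simp add: split_classes_def count_image_mset not_in_iff)
qed

lemma join_split_classes:
  assumes "set_mset X \<subseteq> D"
  shows "join_classes N enc (split_classes N cls quo X) = X"
proof (rule multiset_eqI)
  fix v
  show "count (join_classes N enc (split_classes N cls quo X)) v = count X v"
  proof (cases "v \<in> D")
    case True
    then show ?thesis
      using coding assms by (simp add: count_join_classes count_split_classes class_coding_def)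
  next
    case False
    then show ?thesis using assms by (auto simp: count_join_classes not_in_iff)
  qed
qed

lemma split_join_classes:
  assumes "T \<in> extensional {..<N}"
  shows "split_classes N cls quo (join_classes N enc T) = T"
proof
  fix j
  show "split_classes N cls quo (join_classes N enc T) j = T j"
  proof (cases "j < N")
    case True
    then show ?thesis
      using coding
      by (simp add: multiset_eq_iff count_split_classes set_join_classes count_join_classes class_coding_def)
  next
    case False
    then show ?thesis using assms by (simp add: split_classes_def extensional_def)
  qed
qed

lemma bij_betw_split_classes:
  "bij_betw (split_classes N cls quo) {X. set_mset X \<subseteq> D} (extensional {..<N})"
  by (rule bij_betw_byWitness[where f' = "join_classes N enc"])
    (use set_join_classes in \<open>auto simp: join_split_classes split_join_classes split_classes_extensional\<close>)

lemma repeats_split_classes_iff: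
  assumes X: "set_mset X \<subseteq> D" and P: "\<And>j q. j < N \<Longrightarrow> P (enc j q) \<longleftrightarrow> \<not> strict j"
  shows "(\<forall>v. 2 \<le> count X v \<longrightarrow> P v)
    \<longleftrightarrow> (\<forall>j<N. strict j \<longrightarrow> (\<forall>q. count (split_classes N cls quo X j) q \<le> 1))"
proof
  assume rep: "\<forall>v. 2 \<le> count X v \<longrightarrow> P v"
  show "\<forall>j<N. strict j \<longrightarrow> (\<forall>q. count (split_classes N cls quo X j) q \<le> 1)"
  proof (intro allI impI)
    fix j q assume j: "j < N" and "strict j"
    show "count (split_classes N cls quo X j) q \<le> 1"
    proof (rule ccontr)
      assume "\<not> count (split_classes N cls quo X j) q \<le> 1"
      then have "2 \<le> count X (enc j q)" using count_split_classes[OF X j] by simp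
      then have "P (enc j q)" using rep by blast
      with P[OF j] \<open>strict j\<close> show False by simp
    qed
  qed
next
  assume split: "\<forall>j<N. strict j \<longrightarrow> (\<forall>q. count (split_classes N cls quo X j) q \<le> 1)"
  show "\<forall>v. 2 \<le> count X v \<longrightarrow> P v"
  proof (intro allI impI)
    fix v assume v: "2 \<le> count X v"
    then have "v \<in># X" by (simp flip: count_greater_zero_iff)
    then have "v \<in> D" using X by blast
    then have "cls v < N" and v_code: "enc (cls v) (quo v) = v" using coding by (auto simp: class_coding_def)
    have two: "2 \<le> count (split_classes N cls quo X (cls v)) (quo v)"
      using v X \<open>cls v < N\<close> by (simp add: count_split_classes v_code)
    have "\<not> strict (cls v)"
    proof
      assume "strict (cls v)"
      then have "count (split_classes N cls quo X (cls v)) (quo v) \<le> 1"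
        using split \<open>cls v < N\<close> by blast
      with two show False by simp
    qed
    then show "P v" using P[OF \<open>cls v < N\<close>, of "quo v"] by (simp add: v_code)
  qed
qed

lemma size_split_classes:
  assumes "set_mset X \<subseteq> D"
  shows "size X = (\<Sum>j<N. size (split_classes N cls quo X j))"
  using arg_cong[OF join_split_classes[OF assms], of size] by (simp add: join_classes_def)

lemma sum_mset_split_classes:
  assumes "set_mset X \<subseteq> D" and w: "\<And>j q. j < N \<Longrightarrow> w (enc j q) = q + g j"
  shows "sum_mset (image_mset w X)
    = (\<Sum>j<N. sum_mset (split_classes N cls quo X j) + g j * size (split_classes N cls quo X j))"
proof -
  have "sum_mset (image_mset w X) = sum_mset (image_mset w (join_classes N enc (split_classes N cls quo X)))"
    by (simp only: join_split_classes[OF assms(1)])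
  also have "\<dots> = (\<Sum>j<N. sum_mset (image_mset (\<lambda>q. q + g j) (split_classes N cls quo X j)))"
    unfolding sum_mset_image_join_classes by (simp add: w)
  also have "\<dots> = (\<Sum>j<N. sum_mset (split_classes N cls quo X j) + g j * size (split_classes N cls quo X j))"
    by (simp add: sum_mset_image_add_const)
  finally show ?thesis .
qed

end

section \<open>Colours of the parts\<close>

definition residue_count :: "nat \<Rightarrow> nat \<Rightarrow> nat \<Rightarrow> nat" where
  "residue_count N v c = card {t. t < v \<and> t mod N = c}"

lemma residue_count_eq:
  assumes "c < N" "e \<le> N"
  shows "residue_count N (N * q + e) c = q + (if c < e then 1 else 0)"
proof -
  have "{i. N * i + c < N * q + e} = {..<q + (if c < e then 1 else 0)}"
  proof (intro equalityI subsetI)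
    fix i assume i: "i \<in> {i. N * i + c < N * q + e}"
    show "i \<in> {..<q + (if c < e then 1 else 0)}"
    proof (rule ccontr)
      assume "i \<notin> {..<q + (if c < e then 1 else 0)}"
      then have "N * (q + (if c < e then 1 else 0)) \<le> N * i" by (intro mult_le_mono2) simp
      then have "N * q + (if c < e then N else 0) \<le> N * i" by (simp add: distrib_left split: if_splits)
      then show False using i assms by (simp split: if_splits)
    qed
  next
    fix i assume "i \<in> {..<q + (if c < e then 1 else 0)}"
    then consider "i < q" | "i = q" "c < e" by (cases "c < e") (auto simp: less_Suc_eq)
    then show "i \<in> {i. N * i + c < N * q + e}"
    proof cases
      case 1
      then have "N * (i + 1) \<le> N * q" by (intro mult_le_mono2) simp
      then show ?thesis using assms by simp
    qed simp
  qed
  moreover have "{t. t < N * q + e \<and> t mod N = c} = (\<lambda>i. N * i + c) ` {i. N * i + c < N * q + e}"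
  proof (intro equalityI subsetI)
    fix t assume "t \<in> {t. t < N * q + e \<and> t mod N = c}"
    moreover have "t = N * (t div N) + t mod N" by simp
    ultimately show "t \<in> (\<lambda>i. N * i + c) ` {i. N * i + c < N * q + e}" by (auto intro: image_eqI)
  qed (use assms in auto)
  moreover have "inj (\<lambda>i. N * i + c)" using assms by (intro injI) simp
  ultimately show ?thesis by (simp add: residue_count_def card_image inj_on_subset)
qed

lemma neg_Suc_mod_iff:
  assumes "c < N"
  shows "(- int (Suc u)) mod int N = int c \<longleftrightarrow> u mod N = N - Suc c"
proof -
  have r: "u mod N < N" using assms by simp
  have eq: "- int (Suc u) = int (N - Suc (u mod N)) + int N * (- int (u div N + 1))"
    using r div_mult_mod_eq[of u N] by (simp add: of_nat_diff algebra_simps flip: of_nat_mult of_nat_add)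
  have "(- int (Suc u)) mod int N = int (N - Suc (u mod N)) mod int N"
    unfolding eq by simp
  also have "\<dots> = int (N - Suc (u mod N))"
    using r by (subst zmod_int[symmetric]) simp
  finally have "(- int (Suc u)) mod int N = int (N - Suc (u mod N))" .
  then show ?thesis using assms r by auto
qed

text \<open>Shifting t to t - 1 turns the colours -1, ..., -v of a row of \<mu> into the residues of
  0, ..., v - 1, colour c becoming residue N - 1 - c.\<close>

lemma wt_exp_zero:
  assumes "c < N"
  shows "wt_exp N 0 lam mu c = (\<Sum>j\<in>{j. lam j \<noteq> 0}. residue_count N (lam j) c)
    + (\<Sum>j\<in>{j. mu j \<noteq> 0}. residue_count N (mu j) (N - Suc c))"
proof -
  have "{t. t < v \<and> (0 + int t) mod int N = int c} = {t. t < v \<and> t mod N = c}" for v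
    by (simp flip: zmod_int)
  moreover have "{t. 1 \<le> t \<and> t \<le> v \<and> (0 - int t) mod int N = int c}
      = Suc ` {u. u < v \<and> u mod N = N - Suc c}" for v
  proof -
    have "{t. 1 \<le> t \<and> t \<le> v \<and> (0 - int t) mod int N = int c}
        = Suc ` {u. u < v \<and> (- int (Suc u)) mod int N = int c}"
      by (auto simp: image_iff Suc_le_eq gr0_conv_Suc)
    then show ?thesis using neg_Suc_mod_iff[OF assms] by simp
  qed
  ultimately show ?thesis by (simp add: wt_exp_def residue_count_def card_image)
qed

lemma periodic_shift:
  fixes s :: "int \<Rightarrow> 'a"
  assumes per: "\<forall>i. s (i + int N) = s i"
  shows "s (i + int N * k) = s i"
proof -
  have nat_shift: "s (i + int N * int n) = s i" for i n
  proof (induction n)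
    case (Suc n)
    have "s (i + int N * int (Suc n)) = s ((i + int N * int n) + int N)"
      by (simp add: algebra_simps)
    then show ?case using per Suc.IH by simp
  qed simp
  show ?thesis
  proof (cases "0 \<le> k")
    case True
    then show ?thesis using nat_shift[of i "nat k"] by simp
  next
    case False
    then show ?thesis using nat_shift[of "i + int N * k" "nat (- k)"] by simp
  qed
qed

text \<open>A part v of \<lambda> (boxes of colours 0, ..., v - 1) and a part v of \<mu> (colours -1, ..., -v)
  are classified by the colour j of their last box; the quotient q counts complete periods.\<close>

definition lam_code :: "nat \<Rightarrow> nat \<Rightarrow> nat \<Rightarrow> nat" where
  "lam_code N j q = N * q + j + 1"

definition lam_class :: "nat \<Rightarrow> nat \<Rightarrow> nat" where
  "lam_class N v = (v - 1) mod N"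

definition lam_quot :: "nat \<Rightarrow> nat \<Rightarrow> nat" where
  "lam_quot N v = (v - 1) div N"

definition mu_code :: "nat \<Rightarrow> nat \<Rightarrow> nat \<Rightarrow> nat" where
  "mu_code N j q = N * q + (N - j) mod N"

definition mu_class :: "nat \<Rightarrow> nat \<Rightarrow> nat" where
  "mu_class N v = (N - v mod N) mod N"

definition mu_quot :: "nat \<Rightarrow> nat \<Rightarrow> nat" where
  "mu_quot N v = v div N"

lemma class_coding_lam:
  assumes "0 < N"
  shows "class_coding N (lam_code N) (lam_class N) (lam_quot N) {v. 0 < v}"
  unfolding class_coding_def
proof (intro conjI allI impI ballI)
  fix v :: nat assume "v \<in> {v. 0 < v}"
  then show "lam_code N (lam_class N v) (lam_quot N v) = v"
    using div_mult_mod_eq[of "v - 1" N] by (simp add: lam_code_def lam_class_def lam_quot_def mult.commute)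
qed (use assms in \<open>simp_all add: lam_code_def lam_class_def lam_quot_def\<close>)

lemma class_coding_mu:
  assumes "0 < N"
  shows "class_coding N (mu_code N) (mu_class N) (mu_quot N) UNIV"
  unfolding class_coding_def
proof (intro conjI allI impI ballI)
  fix j q assume j: "j < N"
  show "mu_class N (mu_code N j q) = j"
  proof (cases "j = 0")
    case False
    have "(N * q + (N - j) mod N) mod N = N - j"
      using j False mod_mult_self4[of N q "(N - j) mod N"] by (simp del: mod_mult_self4)
    then show ?thesis using j False by (simp add: mu_code_def mu_class_def)
  qed (simp add: mu_code_def mu_class_def)
  show "mu_quot N (mu_code N j q) = q"
    using assms by (simp add: mu_code_def mu_quot_def)
next
  fix v :: nat
  show "mu_class N v < N" using assms by (simp add: mu_class_def)
  have "(N - mu_class N v) mod N = v mod N"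
    using assms by (cases "v mod N = 0") (simp_all add: mu_class_def)
  then show "mu_code N (mu_class N v) (mu_quot N v) = v"
    using div_mult_mod_eq[of v N] by (simp add: mu_code_def mu_quot_def mult.commute)
qed simp

lemma residue_count_lam_code:
  assumes "j < N" "c < N"
  shows "residue_count N (lam_code N j q) c = q + (if c \<le> j then 1 else 0)"
  using residue_count_eq[of c N "j + 1" q] assms by (simp add: lam_code_def add.assoc)

lemma residue_count_mu_code:
  assumes "j < N" "c < N"
  shows "residue_count N (mu_code N j q) (N - Suc c) = q + (if 0 < j \<and> j \<le> c then 1 else 0)"
proof (cases "j = 0")
  case True
  then show ?thesis using residue_count_eq[of "N - Suc c" N 0 q] assms by (simp add: mu_code_def)
next
  case False
  moreover have "N - Suc c < N - j \<longleftrightarrow> j \<le> c" using assms by linarith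
  ultimately show ?thesis using residue_count_eq[of "N - Suc c" N "N - j" q] assms by (simp add: mu_code_def)
qed

lemma sign_lam_code:
  assumes "\<forall>i. s (i + int N) = s i"
  shows "s (int (lam_code N j q)) = s (int j + 1)"
  using periodic_shift[OF assms, of "int j + 1" "int q"] by (simp add: lam_code_def algebra_simps)

lemma sign_mu_code:
  assumes "\<forall>i. s (i + int N) = s i" "j < N"
  shows "s (- int (mu_code N j q)) = s (int j)"
proof (cases "j = 0")
  case True
  then show ?thesis using periodic_shift[OF assms(1), of 0 "- int q"] by (simp add: mu_code_def)
next
  case False
  then have "- int (mu_code N j q) = int j + int N * (- int q - 1)"
    using assms(2) by (simp add: mu_code_def of_nat_diff algebra_simps)
  then show ?thesis using periodic_shift[OF assms(1), of "int j" "- int q - 1"] by simp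
qed

definition class_families :: "nat \<Rightarrow> (int \<Rightarrow> int) \<Rightarrow> ((nat \<Rightarrow> nat multiset) \<times> (nat \<Rightarrow> nat multiset)) set" where
  "class_families N s = {(TA, TB).
     TA \<in> PiE {..<N} (\<lambda>j. {X. s (int j + 1) = 1 \<longrightarrow> (\<forall>q. count X q \<le> 1)})
     \<and> TB \<in> PiE {..<N} (\<lambda>j. {X. s (int j) = 1 \<longrightarrow> (\<forall>q. count X q \<le> 1)})
     \<and> (\<Sum>j<N. size (TA j)) = (\<Sum>j<N. size (TB j))}"

definition split_pair ::
    "nat \<Rightarrow> nat multiset \<times> nat multiset \<Rightarrow> (nat \<Rightarrow> nat multiset) \<times> (nat \<Rightarrow> nat multiset)" where
  "split_pair N = map_prod (split_classes N (lam_class N) (lam_quot N)) (split_classes N (mu_class N) (mu_quot N))"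

lemma repeats_iff_lam_classes:
  fixes s :: "int \<Rightarrow> int"
  assumes N: "0 < N" and per: "\<forall>i. s (i + int N) = s i" and sign: "\<forall>i. s i = 1 \<or> s i = -1"
    and A: "set_mset A \<subseteq> {v. 0 < v}"
  shows "(\<forall>v. 2 \<le> count A v \<longrightarrow> s (int v) = -1)
    \<longleftrightarrow> (\<forall>j<N. s (int j + 1) = 1 \<longrightarrow>
          (\<forall>q. count (split_classes N (lam_class N) (lam_quot N) A j) q \<le> 1))"
proof (rule repeats_split_classes_iff[OF class_coding_lam[OF N] A])
  fix j q
  show "s (int (lam_code N j q)) = -1 \<longleftrightarrow> \<not> s (int j + 1) = 1"
    using sign[rule_format, of "int j + 1"] by (auto simp: sign_lam_code[OF per])
qed

lemma repeats_iff_mu_classes: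
  fixes s :: "int \<Rightarrow> int"
  assumes N: "0 < N" and per: "\<forall>i. s (i + int N) = s i" and sign: "\<forall>i. s i = 1 \<or> s i = -1"
  shows "(\<forall>v. 2 \<le> count B v \<longrightarrow> s (- int v) = -1)
    \<longleftrightarrow> (\<forall>j<N. s (int j) = 1 \<longrightarrow>
          (\<forall>q. count (split_classes N (mu_class N) (mu_quot N) B j) q \<le> 1))"
proof (rule repeats_split_classes_iff[OF class_coding_mu[OF N]])
  fix j q assume "j < N"
  then show "s (- int (mu_code N j q)) = -1 \<longleftrightarrow> \<not> s (int j) = 1"
    using sign[rule_format, of "int j"] by (auto simp: sign_mu_code[OF per])
qed simp

lemma bij_betw_split_pair:
  fixes s :: "int \<Rightarrow> int"
  assumes N: "0 < N" and per: "\<forall>i. s (i + int N) = s i" and sign: "\<forall>i. s i = 1 \<or> s i = -1"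
  shows "bij_betw (split_pair N) (part_multisets s) (class_families N s)"
proof -
  define PM where "PM = (\<lambda>(A :: nat multiset, B :: nat multiset). size A = size B
    \<and> (\<forall>v. 2 \<le> count A v \<longrightarrow> s (int v) = -1) \<and> (\<forall>v. 2 \<le> count B v \<longrightarrow> s (- int v) = -1))"
  define PF where "PF = (\<lambda>(TA :: nat \<Rightarrow> nat multiset, TB :: nat \<Rightarrow> nat multiset).
    (\<Sum>j<N. size (TA j)) = (\<Sum>j<N. size (TB j))
    \<and> (\<forall>j<N. s (int j + 1) = 1 \<longrightarrow> (\<forall>q. count (TA j) q \<le> 1))
    \<and> (\<forall>j<N. s (int j) = 1 \<longrightarrow> (\<forall>q. count (TB j) q \<le> 1)))"
  note codA = class_coding_lam[OF N] and codB = class_coding_mu[OF N]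
  have "bij_betw (split_pair N) ({A. set_mset A \<subseteq> {v. 0 < v}} \<times> UNIV)
      (extensional {..<N} \<times> extensional {..<N})"
    unfolding split_pair_def using bij_betw_split_classes[OF codB]
    by (intro bij_betw_map_prod bij_betw_split_classes[OF codA]) simp
  moreover have "PF (split_pair N (A, B)) \<longleftrightarrow> PM (A, B)" if A: "set_mset A \<subseteq> {v. 0 < v}" for A B
    using size_split_classes[OF codA A] size_split_classes[OF codB, of B]
      repeats_iff_lam_classes[OF N per sign A] repeats_iff_mu_classes[OF N per sign, of B]
    by (simp add: split_pair_def PF_def PM_def)
  ultimately have "bij_betw (split_pair N) {p \<in> {A. set_mset A \<subseteq> {v. 0 < v}} \<times> UNIV. PM p}
      {t \<in> extensional {..<N} \<times> extensional {..<N}. PF t}"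
    by (intro bij_betw_Collect) auto
  moreover have "part_multisets s = {p \<in> {A. set_mset A \<subseteq> {v. 0 < v}} \<times> UNIV. PM p}"
    by (auto simp: part_multisets_def PM_def intro: gr0I)
  moreover have "class_families N s = {t \<in> extensional {..<N} \<times> extensional {..<N}. PF t}"
    by (auto simp: class_families_def PF_def PiE_def Pi_def)
  ultimately show ?thesis by simp
qed

definition colour_weight :: "nat \<Rightarrow> nat multiset \<Rightarrow> nat multiset \<Rightarrow> nat \<Rightarrow> nat" where
  "colour_weight N A B c = (\<Sum>v\<in>#A. residue_count N v c) + (\<Sum>v\<in>#B. residue_count N v (N - Suc c))"

definition class_weight :: "nat \<Rightarrow> (nat \<Rightarrow> nat) \<Rightarrow> (nat \<Rightarrow> nat) \<Rightarrow> nat \<Rightarrow> nat" where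
  "class_weight N a b c = (\<Sum>j<N. if c \<le> j then a j else 0) + (\<Sum>j<N. if 0 < j \<and> j \<le> c then b j else 0)"

definition family_sizes :: "nat \<Rightarrow> (nat \<Rightarrow> nat multiset) \<Rightarrow> nat \<Rightarrow> nat" where
  "family_sizes N T j = (if j < N then size (T j) else 0)"

definition family_total :: "nat \<Rightarrow> (nat \<Rightarrow> nat multiset) \<Rightarrow> nat" where
  "family_total N T = (\<Sum>j<N. sum_mset (T j))"

definition pair_total :: "nat \<Rightarrow> (nat \<Rightarrow> nat multiset) \<times> (nat \<Rightarrow> nat multiset) \<Rightarrow> nat" where
  "pair_total N = (\<lambda>(TA, TB). family_total N TA + family_total N TB)"

definition family_weight :: "nat \<Rightarrow> (nat \<Rightarrow> nat multiset) \<times> (nat \<Rightarrow> nat multiset) \<Rightarrow> nat \<Rightarrow> nat" where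
  "family_weight N = (\<lambda>(TA, TB) c. family_total N TA + family_total N TB
     + class_weight N (family_sizes N TA) (family_sizes N TB) c)"

lemma wt_exp_eq_colour_weight:
  assumes lam: "partition_seq lam" and mu: "\<forall>j. lam j = 0 \<longrightarrow> mu j = 0" and "c < N"
  shows "wt_exp N 0 lam mu c = (case parts_pair (lam, mu) of (A, B) \<Rightarrow> colour_weight N A B c)"
proof -
  let ?L = "num_parts lam"
  have lam_parts: "{j. lam j \<noteq> 0} = {..<?L}"
    unfolding set_eq_iff using partition_seq_nonzero_iff[OF lam] by simp
  have mu_parts: "(\<Sum>j\<in>{j. mu j \<noteq> 0}. residue_count N (mu j) (N - Suc c))
      = (\<Sum>j<?L. residue_count N (mu j) (N - Suc c))"
  proof (rule sum.mono_neutral_left)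
    show "{j. mu j \<noteq> 0} \<subseteq> {..<?L}"
    proof
      fix j assume "j \<in> {j. mu j \<noteq> 0}"
      then have "lam j \<noteq> 0" using mu by auto
      then show "j \<in> {..<?L}" using partition_seq_nonzero_iff[OF lam, of j] by simp
    qed
  qed (simp_all add: residue_count_def)
  show ?thesis
    unfolding wt_exp_zero[OF \<open>c < N\<close>] lam_parts mu_parts
    by (simp add: parts_pair_def colour_weight_def sum_mset_image_parts_mset)
qed

lemma colour_weight_eq_family_weight:
  assumes N: "0 < N" and A: "0 \<notin># A" and c: "c < N"
  shows "colour_weight N A B c = family_weight N (split_pair N (A, B)) c"
proof -
  let ?TA = "split_classes N (lam_class N) (lam_quot N) A"
  let ?TB = "split_classes N (mu_class N) (mu_quot N) B"
  have "set_mset A \<subseteq> {v. 0 < v}" using A by (auto intro: gr0I)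
  then have "(\<Sum>v\<in>#A. residue_count N v c)
      = (\<Sum>j<N. sum_mset (?TA j) + (if c \<le> j then 1 else 0) * size (?TA j))"
    by (rule sum_mset_split_classes[OF class_coding_lam[OF N]]) (simp add: residue_count_lam_code c)
  moreover have "(\<Sum>v\<in>#B. residue_count N v (N - Suc c))
      = (\<Sum>j<N. sum_mset (?TB j) + (if 0 < j \<and> j \<le> c then 1 else 0) * size (?TB j))"
    by (rule sum_mset_split_classes[OF class_coding_mu[OF N]]) (simp_all add: residue_count_mu_code c)
  moreover have "(if P then 1 else 0) * x = (if P then x else 0)" for P and x :: nat by simp
  moreover have "class_weight N (family_sizes N ?TA) (family_sizes N ?TB) c
      = (\<Sum>j<N. if c \<le> j then size (?TA j) else 0) + (\<Sum>j<N. if 0 < j \<and> j \<le> c then size (?TB j) else 0)"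
    unfolding class_weight_def by (intro arg_cong2[where f = "(+)"] sum.cong) (simp_all add: family_sizes_def)
  ultimately show ?thesis
    by (simp add: colour_weight_def family_weight_def split_pair_def family_total_def sum.distrib)
qed

lemma card_Pset_weight_fibre:
  fixes s :: "int \<Rightarrow> int"
  assumes N: "0 < N" and per: "\<forall>i. s (i + int N) = s i" and sign: "\<forall>i. s i = 1 \<or> s i = -1"
    and s0: "s 0 = -1"
  shows "card {(lam, mu) \<in> Pset s 0 (-1). \<forall>c<N. wt_exp N 0 lam mu c = d c}
    = card {t \<in> class_families N s. \<forall>c<N. family_weight N t c = d c}"
proof -
  have bij: "bij_betw (split_pair N \<circ> parts_pair) (Pset s 0 (-1)) (class_families N s)"
    by (rule bij_betw_trans[OF bij_betw_parts_pair[where s = s, OF s0] bij_betw_split_pair[OF N per sign]])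
  have "wt_exp N 0 lam mu c = family_weight N ((split_pair N \<circ> parts_pair) (lam, mu)) c"
    if "(lam, mu) \<in> Pset s 0 (-1)" "c < N" for lam mu c
  proof -
    obtain A B where AB: "parts_pair (lam, mu) = (A, B)" by fastforce
    then have "0 \<notin># A" using parts_pair_in_part_multisets[where s = s, OF s0 that(1)] by (simp add: part_multisets_def)
    then show ?thesis
      using that AB Pset_zero_iff[where s = s, OF s0]
      by (simp add: wt_exp_eq_colour_weight colour_weight_eq_family_weight[OF N])
  qed
  then have "bij_betw (split_pair N \<circ> parts_pair)
      {p \<in> Pset s 0 (-1). \<forall>c<N. wt_exp N 0 (fst p) (snd p) c = d c}
      {t \<in> class_families N s. \<forall>c<N. family_weight N t c = d c}"
    by (intro bij_betw_Collect[OF bij]) auto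
  moreover have "{(lam, mu) \<in> Pset s 0 (-1). \<forall>c<N. wt_exp N 0 lam mu c = d c}
      = {p \<in> Pset s 0 (-1). \<forall>c<N. wt_exp N 0 (fst p) (snd p) c = d c}"
    by auto
  ultimately show ?thesis by (simp add: bij_betw_same_card)
qed

section \<open>Counting by class sizes\<close>

definition strict_offset :: "nat \<Rightarrow> (int \<Rightarrow> int) \<Rightarrow> (nat \<Rightarrow> nat) \<Rightarrow> (nat \<Rightarrow> nat) \<Rightarrow> nat" where
  "strict_offset N s a b = (\<Sum>j<N. (if s (int j + 1) = 1 then a j * (a j - 1) div 2 else 0)
                                 + (if s (int j) = 1 then b j * (b j - 1) div 2 else 0))"

lemma Qexp_summand_eq:
  fixes k :: nat and \<sigma> :: int
  assumes "\<sigma> = 1 \<or> \<sigma> = -1"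
  shows "int k * (int k - 1) * (1 + \<sigma>) div 4 = int (if \<sigma> = 1 then k * (k - 1) div 2 else 0)"
proof (cases "\<sigma> = 1")
  case True
  have "int k * (int k - 1) = int (k * (k - 1))" by (cases k) (auto simp: algebra_simps)
  then have "int k * (int k - 1) * (1 + \<sigma>) div 4 = (int (k * (k - 1)) * 2) div (2 * 2)"
    unfolding True \<open>int k * (int k - 1) = int (k * (k - 1))\<close> by simp
  also have "\<dots> = int (k * (k - 1)) div 2" by (rule div_mult_mult2) simp
  also have "\<dots> = int (k * (k - 1) div 2)" by (simp add: zdiv_int)
  finally show ?thesis using True by simp
qed (use assms in simp)

lemma Qexp_eq_strict_offset:
  assumes "\<forall>i. s i = 1 \<or> s i = -1"
  shows "Qexp N s a b = int (strict_offset N s a b)"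
  unfolding Qexp_def strict_offset_def of_nat_sum of_nat_add
  by (intro sum.cong refl) (simp only: Qexp_summand_eq[OF assms[rule_format]])

lemma sum_Collect_lessThan:
  fixes N :: nat
  shows "(\<Sum>j\<in>{j. j < N \<and> P j}. f j) = (\<Sum>j<N. if P j then f j else 0)"
  using sum.inter_filter[where A = "{..<N}" and P = P and g = f, OF finite_lessThan] by simp

lemma Eexp_eq_class_weight:
  assumes "0 < N"
  shows "Eexp N a b t = int (class_weight N a b t)"
proof -
  have "(\<Sum>j<N. if j \<le> t then int (b j) else 0)
      = (\<Sum>j<N. if j = 0 then int (b j) else 0) + (\<Sum>j<N. if 0 < j \<and> j \<le> t then int (b j) else 0)"
    by (subst sum.distrib[symmetric]) (rule sum.cong, auto)
  moreover have "(\<Sum>j<N. if j = 0 then int (b j) else 0) = int (b 0)" using assms by simp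
  moreover have "int (\<Sum>j<N. if P j then f j else 0) = (\<Sum>j<N. if P j then int (f j) else 0)"
    for P and f :: "nat \<Rightarrow> nat"
    by (induction N) auto
  ultimately show ?thesis
    unfolding Eexp_def class_weight_def sum_Collect_lessThan by simp
qed

definition sized_families :: "nat \<Rightarrow> (int \<Rightarrow> int) \<Rightarrow> (nat \<Rightarrow> nat) \<Rightarrow> (nat \<Rightarrow> nat)
    \<Rightarrow> ((nat \<Rightarrow> nat multiset) \<times> (nat \<Rightarrow> nat multiset)) set" where
  "sized_families N s a b = PiE {..<N} (\<lambda>j. sized_msets (a j) (s (int j + 1) = 1))
                            \<times> PiE {..<N} (\<lambda>j. sized_msets (b j) (s (int j) = 1))"

lemma fps_nth_zero_prod: "fps_nth (\<Prod>i\<in>A. f i) 0 = (\<Prod>i\<in>A. fps_nth (f i) 0)"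
  by (induction A rule: infinite_finite_induct) auto

lemma count_fps_sized_families:
  "count_fps (sized_families N s a b) (pair_total N) = fps_X ^ strict_offset N s a b * Fser N a b"
proof -
  let ?F = "\<lambda>k strict. count_fps (sized_msets k strict) sum_mset"
  let ?P = "\<Prod>j<N. qpoch (a j) * qpoch (b j)"
  have fib: "finite_fibres (PiE {..<N} (\<lambda>j. sized_msets (c j) (strict j))) (\<lambda>T. \<Sum>j<N. sum_mset (T j))"
    for c strict
    by (intro finite_fibres_PiE finite_fibres_sized_msets) simp
  define G where "G = (\<Prod>j<N. ?F (a j) (s (int j + 1) = 1)) * (\<Prod>j<N. ?F (b j) (s (int j) = 1))"
  have "count_fps (sized_families N s a b) (pair_total N) = G"
    unfolding sized_families_def pair_total_def family_total_def G_def
    by (simp add: count_fps_Times[OF fib fib] count_fps_PiE[where w = "\<lambda>_. sum_mset"]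
        finite_fibres_sized_msets)
  moreover have "G * ?P = fps_X ^ strict_offset N s a b"
  proof -
    have "G * ?P = (\<Prod>j<N. (?F (a j) (s (int j + 1) = 1) * qpoch (a j)) * (?F (b j) (s (int j) = 1) * qpoch (b j)))"
      by (simp add: G_def prod.distrib ac_simps)
    also have "\<dots> = fps_X ^ strict_offset N s a b"
      by (simp add: count_fps_sized_msets strict_offset_def power_sum power_add if_distrib[of "power fps_X"]
          cong: if_cong)
    finally show ?thesis .
  qed
  moreover have "fps_nth ?P 0 \<noteq> 0" by (simp add: fps_nth_zero_prod qpoch_def)
  then have "G = G * ?P * inverse ?P" by (simp add: inverse_mult_eq_1' mult.assoc)
  ultimately show ?thesis by (simp add: Fser_def)
qed

text \<open>The colour weight of a class family depends only on its class sizes a, b and on the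
  total R of its quotients.\<close>

definition weight_index :: "nat \<Rightarrow> (nat \<Rightarrow> nat) \<Rightarrow> ((nat \<Rightarrow> nat) \<times> (nat \<Rightarrow> nat) \<times> nat) set" where
  "weight_index N d = {(a, b, R). (\<forall>t\<ge>N. a t = 0) \<and> (\<forall>t\<ge>N. b t = 0) \<and> (\<Sum>j<N. a j) = (\<Sum>j<N. b j)
     \<and> (\<forall>c<N. d c = R + class_weight N a b c)}"

lemma family_sizes_eq:
  assumes "T \<in> PiE {..<N} (\<lambda>j. sized_msets (a j) (strict j))" "\<forall>t\<ge>N. a t = 0"
  shows "family_sizes N T = a"
  using assms by (auto simp: family_sizes_def sized_msets_def PiE_def Pi_def)

lemma sum_family_sizes: "(\<Sum>j<N. family_sizes N T j) = (\<Sum>j<N. size (T j))"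
  by (rule sum.cong) (simp_all add: family_sizes_def)

lemma weight_fibre_eq_UN:
  "{t \<in> class_families N s. \<forall>c<N. family_weight N t c = d c}
     = (\<Union>(a, b, R)\<in>weight_index N d. {t \<in> sized_families N s a b. pair_total N t = R})"
proof (intro equalityI subsetI)
  fix t assume t: "t \<in> {t \<in> class_families N s. \<forall>c<N. family_weight N t c = d c}"
  obtain TA TB where t_eq: "t = (TA, TB)" by fastforce
  let ?a = "family_sizes N TA" and ?b = "family_sizes N TB"
  have "t \<in> sized_families N s ?a ?b"
    using t by (auto simp: t_eq class_families_def sized_families_def sized_msets_def
        family_sizes_def PiE_def Pi_def)
  moreover have "(?a, ?b, pair_total N t) \<in> weight_index N d"
    using t by (auto simp: t_eq weight_index_def class_families_def family_weight_def
        pair_total_def sum_family_sizes) (simp_all add: family_sizes_def)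
  ultimately show "t \<in> (\<Union>(a, b, R)\<in>weight_index N d. {t \<in> sized_families N s a b. pair_total N t = R})"
    by blast
next
  fix t assume "t \<in> (\<Union>(a, b, R)\<in>weight_index N d. {t \<in> sized_families N s a b. pair_total N t = R})"
  then obtain a b where ab: "(a, b, pair_total N t) \<in> weight_index N d"
    and T: "t \<in> sized_families N s a b" by auto
  obtain TA TB where t_eq: "t = (TA, TB)" by fastforce
  have sizes: "family_sizes N TA = a" "family_sizes N TB = b"
    using T ab by (auto simp: t_eq sized_families_def weight_index_def intro: family_sizes_eq)
  then have "(\<Sum>j<N. size (TA j)) = (\<Sum>j<N. size (TB j))"
    using ab by (simp add: weight_index_def flip: sum_family_sizes)
  then have "t \<in> class_families N s"
    using T by (auto simp: t_eq class_families_def sized_families_def sized_msets_def PiE_def Pi_def)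
  then show "t \<in> {t \<in> class_families N s. \<forall>c<N. family_weight N t c = d c}"
    using ab sizes by (simp add: t_eq weight_index_def family_weight_def pair_total_def)
qed

lemma finite_bounded_funs: "finite {f :: nat \<Rightarrow> nat. (\<forall>x<N. f x \<le> D) \<and> (\<forall>x\<ge>N. f x = 0)}"
proof -
  have "{f :: nat \<Rightarrow> nat. (\<forall>x<N. f x \<le> D) \<and> (\<forall>x\<ge>N. f x = 0)}
      = {f. \<forall>x. (x \<in> {..<N} \<longrightarrow> f x \<in> {..D}) \<and> (x \<notin> {..<N} \<longrightarrow> f x = 0)}"
    by (auto simp: not_less)
  then show ?thesis by (simp only:) (rule finite_set_of_finite_funs; simp)
qed

lemma finite_weight_index:
  assumes "0 < N"
  shows "finite (weight_index N d)"
proof -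
  let ?B = "{f :: nat \<Rightarrow> nat. (\<forall>x<N. f x \<le> d 0) \<and> (\<forall>x\<ge>N. f x = 0)}"
  have "weight_index N d \<subseteq> ?B \<times> ?B \<times> {..d 0}"
  proof
    fix x assume "x \<in> weight_index N d"
    then obtain a b R where x: "x = (a, b, R)" and abR: "(a, b, R) \<in> weight_index N d"
      by (cases x) auto
    then have d0: "d 0 = R + (\<Sum>j<N. a j)" and sums: "(\<Sum>j<N. a j) = (\<Sum>j<N. b j)"
      using assms by (auto simp: weight_index_def class_weight_def)
    have "a x \<le> d 0" "b x \<le> d 0" if "x < N" for x
      using member_le_sum[of x "{..<N}" a] member_le_sum[of x "{..<N}" b] that d0 sums by simp_all
    then show "x \<in> ?B \<times> ?B \<times> {..d 0}"
      using abR d0 by (auto simp: x weight_index_def)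
  qed
  then show ?thesis by (rule finite_subset) (intro finite_cartesian_product finite_bounded_funs finite_atMost)
qed

lemma card_weight_fibre:
  assumes "0 < N"
  shows "real (card {t \<in> class_families N s. \<forall>c<N. family_weight N t c = d c})
    = (\<Sum>(a, b, R)\<in>weight_index N d. fps_nth (fps_X ^ strict_offset N s a b * Fser N a b) R)"
proof -
  let ?fibre = "\<lambda>(a, b, R). {t \<in> sized_families N s a b. pair_total N t = R}"
  have "finite_fibres (sized_families N s a b) (pair_total N)" for a b
    unfolding sized_families_def pair_total_def family_total_def
    by (intro finite_fibres_Times finite_fibres_PiE finite_fibres_sized_msets) simp_all
  then have fin: "finite (?fibre x)" for x
    by (auto simp: finite_fibres_def split: prod.split)
  have index: "x = (family_sizes N (fst t), family_sizes N (snd t), pair_total N t)"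
    if "x \<in> weight_index N d" "t \<in> ?fibre x" for x t
  proof -
    obtain a b R where x: "x = (a, b, R)" by (cases x)
    then have "family_sizes N (fst t) = a" "family_sizes N (snd t) = b"
      using that family_sizes_eq[where T = "fst t" and a = a] family_sizes_eq[where T = "snd t" and a = b]
      by (auto simp: weight_index_def sized_families_def mem_Times_iff)
    then show ?thesis using that by (simp add: x)
  qed
  have disj: "?fibre x \<inter> ?fibre y = {}" if "x \<in> weight_index N d" "y \<in> weight_index N d" "x \<noteq> y"
    for x y
    using that index by blast
  have "real (card {t \<in> class_families N s. \<forall>c<N. family_weight N t c = d c})
      = (\<Sum>x\<in>weight_index N d. real (card (?fibre x)))"
    unfolding weight_fibre_eq_UN
    by (subst card_UN_disjoint) (use finite_weight_index[OF assms] fin disj in auto)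
  also have "\<dots> = (\<Sum>(a, b, R)\<in>weight_index N d. fps_nth (fps_X ^ strict_offset N s a b * Fser N a b) R)"
    by (intro sum.cong refl)
      (auto simp: count_fps_sized_families[symmetric] count_fps_def split: prod.split)
  finally show ?thesis .
qed

lemma rhs_index_iff_weight_index:
  assumes "0 < N" and sign: "\<forall>i. s i = 1 \<or> s i = -1"
  shows "(a, b, r) \<in> rhs_index N s d \<longleftrightarrow> (a, b, strict_offset N s a b + r) \<in> weight_index N d"
proof -
  have "int (d t) = Eexp N a b t + Qexp N s a b + int r \<longleftrightarrow> d t = strict_offset N s a b + r + class_weight N a b t"
    for t
    unfolding Eexp_eq_class_weight[OF assms(1)] Qexp_eq_strict_offset[OF sign] by linarith
  then show ?thesis by (simp add: rhs_index_def weight_index_def)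
qed

lemma bij_betw_rhs_index_weight_index:
  assumes "0 < N" and sign: "\<forall>i. s i = 1 \<or> s i = -1"
  shows "bij_betw (\<lambda>(a, b, r). (a, b, strict_offset N s a b + r)) (rhs_index N s d)
    {(a, b, R) \<in> weight_index N d. strict_offset N s a b \<le> R}"
proof (rule bij_betw_byWitness[where f' = "\<lambda>(a, b, R). (a, b, R - strict_offset N s a b)"])
  show "(\<lambda>(a, b, R). (a, b, R - strict_offset N s a b)) ` {(a, b, R) \<in> weight_index N d. strict_offset N s a b \<le> R}
      \<subseteq> rhs_index N s d"
    using rhs_index_iff_weight_index[OF assms] by auto
qed (use rhs_index_iff_weight_index[OF assms] in auto)

lemma sum_weight_index_eq_sum_rhs_index:
  assumes N: "0 < N" and sign: "\<forall>i. s i = 1 \<or> s i = -1"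
  shows "(\<Sum>(a, b, R)\<in>weight_index N d. fps_nth (fps_X ^ strict_offset N s a b * Fser N a b) R)
    = (\<Sum>(a, b, r)\<in>rhs_index N s d. fps_nth (Fser N a b) r)"
proof -
  let ?g = "\<lambda>(a, b, R). fps_nth (fps_X ^ strict_offset N s a b * Fser N a b) R"
  have "(\<Sum>(a, b, r)\<in>rhs_index N s d. fps_nth (Fser N a b) r)
      = (\<Sum>x\<in>rhs_index N s d. ?g ((\<lambda>(a, b, r). (a, b, strict_offset N s a b + r)) x))"
    by (intro sum.cong) (auto simp: fps_X_power_mult_nth)
  also have "\<dots> = (\<Sum>y\<in>{(a, b, R) \<in> weight_index N d. strict_offset N s a b \<le> R}. ?g y)"
    by (rule sum.reindex_bij_betw[OF bij_betw_rhs_index_weight_index[OF assms]])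
  also have "\<dots> = (\<Sum>y\<in>weight_index N d. ?g y)"
    by (rule sum.mono_neutral_left)
      (auto simp: finite_weight_index[OF N] fps_X_power_mult_nth split: if_splits)
  finally show ?thesis by simp
qed

lemma finite_rhs_index:
  assumes "0 < N" and "\<forall>i. s i = 1 \<or> s i = -1"
  shows "finite (rhs_index N s d)"
  using bij_betw_finite[OF bij_betw_rhs_index_weight_index[OF assms]] finite_weight_index[OF assms(1)]
  by (simp add: case_prod_unfold)

theorem lemma7p1:
  fixes m n N :: nat and s :: "int \<Rightarrow> int" and d :: "nat \<Rightarrow> nat"
  assumes "m \<noteq> n" and "N = m + n" and "N \<ge> 3"
    and "parity_seq N m s"
    and "s 0 = -1"
    and "\<forall>t\<ge>N. d t = 0"
  shows "((\<lambda>(a, b, r). fps_nth (Fser N a b) r) has_sum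
            real (card {(lam, mu) \<in> Pset s 0 (-1). \<forall>c<N. wt_exp N 0 lam mu c = d c}))
           (rhs_index N s d)"
proof -
  have N: "0 < N" using assms(3) by simp
  have sign: "\<forall>i. s i = 1 \<or> s i = -1" and per: "\<forall>i. s (i + int N) = s i"
    using assms(4) by (auto simp: parity_seq_def)
  have "real (card {(lam, mu) \<in> Pset s 0 (-1). \<forall>c<N. wt_exp N 0 lam mu c = d c})
      = real (card {t \<in> class_families N s. \<forall>c<N. family_weight N t c = d c})"
    by (simp add: card_Pset_weight_fibre[OF N per sign assms(5)])
  also have "\<dots> = (\<Sum>(a, b, R)\<in>weight_index N d. fps_nth (fps_X ^ strict_offset N s a b * Fser N a b) R)"
    by (rule card_weight_fibre[OF N])
  also have "\<dots> = (\<Sum>(a, b, r)\<in>rhs_index N s d. fps_nth (Fser N a b) r)"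
    by (rule sum_weight_index_eq_sum_rhs_index[OF N sign])
  finally show ?thesis
    by (intro has_sum_finiteI[OF finite_rhs_index[OF N sign]]) simp
qed

end
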